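(* Let $p$ and $q$ be distinct odd primes, let $a,b$ be nonnegative integers, and set $c=\lfloor (a+1)/(b+2)\rfloor$. If $q<p^c$, then $p^aq^b$ reduces to $p^{a-c}q^{b+1}$.
   Context: For a positive integer $n$, $\mathcal{D}(n)$ is the set of positive divisors of $n$, and $\lambda(n)$ is the least prime factor of $n$ if $n\ge2$, with $\lambda(1)=1$. For positive integers $m,n$, a function $f:\mathcal{D}(n)\to\mathcal{D}(m)$ is called reducing if for all $d,d'\in\mathcal{D}(n)$: (a) $f(d)\le d$; (b) $\frac{m/f(d)}{n/d}\le\min\{1,\ \lambda(m/f(d))/\lambda(n/d)\}$; (c) if $f(d)=2^if(d')$ for some $i\in\mathbb{Z}$, then $d=2^jd'$ for some $j\in\mathbb{Z}$. We say $n$ reduces to $m$ if a reducing function $\mathcal{D}(n)\to\mathcal{D}(m)$ exists. *)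

theory Defs
  imports "HOL-Computational_Algebra.Primes" Complex_Main
begin

definition divisors_set :: "nat \<Rightarrow> nat set" where
  "divisors_set n = {d. 0 < d \<and> d dvd n}"

definition least_pf :: "nat \<Rightarrow> nat" where
  "least_pf n = (if n \<le> 1 then 1 else (LEAST p. prime p \<and> p dvd n))"

definition reducing :: "nat \<Rightarrow> nat \<Rightarrow> (nat \<Rightarrow> nat) \<Rightarrow> bool" where
  "reducing n m f \<longleftrightarrow>
     (\<forall>d\<in>divisors_set n. f d \<in> divisors_set m) \<and>
     (\<forall>d\<in>divisors_set n. f d \<le> d) \<and>
     (\<forall>d\<in>divisors_set n.
        (real (m div f d) / real (n div d))
          \<le> min 1 (real (least_pf (m div f d)) / real (least_pf (n div d)))) \<and>
     (\<forall>d\<in>divisors_set n. \<forall>d'\<in>divisors_set n.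
        (\<exists>i::int. real (f d) = 2 powi i * real (f d')) \<longrightarrow>
        (\<exists>j::int. real d = 2 powi j * real d'))"

definition reduces_to :: "nat \<Rightarrow> nat \<Rightarrow> bool" where
  "reduces_to n m \<longleftrightarrow> (\<exists>f. reducing n m f)"

end

theory Submission
  imports Defs
begin

text \<open>
  Write the divisors of \<open>n = p^a q^b\<close> as \<open>p^i q^j\<close> and give them the weight \<open>i + c(j + 1)\<close>.
  Divisors of weight above \<open>a\<close> are mapped to \<open>p^(i-c) q^(j+1)\<close>: this keeps the cofactor, and
  decreases the divisor because \<open>q < p^c\<close>; the bound \<open>c(b + 2) \<le> a + 1\<close> guarantees \<open>c \<le> i\<close>.
  All other divisors are fixed; their cofactor shrinks by the factor \<open>q / p^c < 1\<close>, which is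
  compensated by the least prime factors, since \<open>\<lambda>(n/d) \<le> p\<close> while \<open>\<lambda>(m/d) \<ge> min p q\<close>.
  The shift preserves the weight, so the map is injective, and as all divisors of \<open>m\<close> are odd,
  condition (c) reduces to injectivity.
\<close>

lemma least_pf_prime_dvd:
  assumes "1 < n"
  shows "prime (least_pf n)" and "least_pf n dvd n"
proof -
  obtain r where "prime r" "r dvd n"
    using assms prime_factor_nat[of n] by auto
  then have "prime (LEAST r. prime r \<and> r dvd n) \<and> (LEAST r. prime r \<and> r dvd n) dvd n"
    by (rule LeastI[of _ r, OF conjI])
  with assms show "prime (least_pf n)" and "least_pf n dvd n"
    by (simp_all add: least_pf_def)
qed

lemma least_pf_pos: "0 < least_pf n"
  using least_pf_prime_dvd(1)[of n] by (cases "1 < n") (auto simp: least_pf_def prime_gt_0_nat)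

lemma least_pf_le_prime_factor:
  assumes "prime r" "r dvd n"
  shows "least_pf n \<le> r"
proof (cases "1 < n")
  case True
  then show ?thesis
    using assms by (auto simp: least_pf_def intro: Least_le)
next
  case False
  then show ?thesis
    using assms prime_ge_1_nat by (auto simp: least_pf_def)
qed

lemma least_pf_ge:
  assumes "1 < n" "\<And>r. prime r \<Longrightarrow> r dvd n \<Longrightarrow> k \<le> r"
  shows "k \<le> least_pf n"
  using assms least_pf_prime_dvd by blast

lemma prime_dvd_prime_powers_mult:
  fixes p q r :: nat
  assumes "prime p" "prime q" "prime r" "r dvd p ^ i * q ^ j"
  shows "r = p \<or> r = q"
  using assms by (metis prime_dvd_mult_iff prime_dvd_power primes_dvd_imp_eq)

lemma least_pf_prime_powers_mult_ge:
  fixes p q :: nat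
  assumes "prime p" "prime q" "0 < i \<or> 0 < j"
  shows "min p q \<le> least_pf (p ^ i * q ^ j)"
proof (rule least_pf_ge)
  have "p ^ i * q ^ j \<noteq> 0" "p ^ i * q ^ j \<noteq> 1"
    using assms by (auto simp: nat_mult_eq_1_iff prime_power_eq_one_iff)
  then show "1 < p ^ i * q ^ j"
    by linarith
next
  show "min p q \<le> r" if "prime r" "r dvd p ^ i * q ^ j" for r
    using prime_dvd_prime_powers_mult[OF assms(1,2) that] by auto
qed

lemma divisors_set_prime_powers_mult:
  fixes p q :: nat
  assumes "prime p" "prime q"
  shows "d \<in> divisors_set (p ^ a * q ^ b) \<longleftrightarrow> (\<exists>i\<le>a. \<exists>j\<le>b. d = p ^ i * q ^ j)"
proof
  assume "d \<in> divisors_set (p ^ a * q ^ b)"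
  then obtain d1 d2 where "d = d1 * d2" "d1 dvd p ^ a" "d2 dvd q ^ b"
    using division_decomp[of d "p ^ a" "q ^ b"] by (auto simp: divisors_set_def)
  then show "\<exists>i\<le>a. \<exists>j\<le>b. d = p ^ i * q ^ j"
    using divides_primepow_nat assms by metis
next
  assume "\<exists>i\<le>a. \<exists>j\<le>b. d = p ^ i * q ^ j"
  then show "d \<in> divisors_set (p ^ a * q ^ b)"
    using assms by (auto simp: divisors_set_def prime_gt_0_nat intro: mult_dvd_mono le_imp_power_dvd)
qed

lemma multiplicity_prime_powers_mult:
  fixes p q :: nat
  assumes "prime p" "prime q" "p \<noteq> q"
  shows "multiplicity p (p ^ i * q ^ j) = i" and "multiplicity q (p ^ i * q ^ j) = j"
  using assms by (simp_all add: prime_elem_multiplicity_mult_distrib prime_gt_0_nat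
      multiplicity_distinct_prime_power)

lemma prime_powers_mult_eq_iff:
  fixes p q :: nat
  assumes "prime p" "prime q" "p \<noteq> q"
  shows "p ^ i * q ^ j = p ^ k * q ^ l \<longleftrightarrow> i = k \<and> j = l"
  using multiplicity_prime_powers_mult[OF assms] by metis

lemma prime_powers_mult_div:
  fixes p q :: nat
  assumes "0 < p" "0 < q" "i \<le> a" "j \<le> b"
  shows "(p ^ a * q ^ b) div (p ^ i * q ^ j) = p ^ (a - i) * q ^ (b - j)"
proof -
  have "p ^ a * q ^ b = (p ^ i * q ^ j) * (p ^ (a - i) * q ^ (b - j))"
    using assms by (simp add: power_add[symmetric] algebra_simps)
  then show ?thesis
    using assms by simp
qed

lemma odd_eq_if_eq_two_powi_mult:
  fixes x y :: nat
  assumes "odd x" "odd y" "real x = 2 powi k * real y"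
  shows "x = y"
proof -
  have "real x = real (2 ^ nat k * y) \<or> real y = real (2 ^ nat (- k) * x)"
    using assms(3) by (cases "0 \<le> k") (auto simp: power_int_def field_simps)
  then have "x = 2 ^ nat k * y \<or> y = 2 ^ nat (- k) * x"
    by (simp only: of_nat_eq_iff)
  with assms(1,2) show ?thesis
    by auto
qed

lemma reducingI_odd_inj:
  assumes "odd m" "inj_on f (divisors_set n)"
    and divisor: "\<And>d. d \<in> divisors_set n \<Longrightarrow> f d \<in> divisors_set m"
    and "\<And>d. d \<in> divisors_set n \<Longrightarrow> f d \<le> d"
    and "\<And>d. d \<in> divisors_set n \<Longrightarrow> real (m div f d) / real (n div d)
          \<le> min 1 (real (least_pf (m div f d)) / real (least_pf (n div d)))"
  shows "reducing n m f"
proof -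
  have "odd (f d)" if "d \<in> divisors_set n" for d
    using divisor[OF that] assms(1) dvd_trans unfolding divisors_set_def by blast
  then have "d = d'"
    if "d \<in> divisors_set n" "d' \<in> divisors_set n" "real (f d) = 2 powi k * real (f d')" for d d' k
    using that odd_eq_if_eq_two_powi_mult inj_onD[OF assms(2)] by metis
  then show ?thesis
    using assms(3-5) unfolding reducing_def by (metis mult_1 power_int_0_right)
qed

locale two_prime_shift =
  fixes p q a b c :: nat
  assumes prime_p: "prime p" and prime_q: "prime q" and distinct: "p \<noteq> q"
    and c_bound: "c * (b + 2) \<le> a + 1" and q_less: "q < p ^ c"
begin

definition shift :: "nat \<Rightarrow> nat" where
  "shift d = (if a < multiplicity p d + c * (multiplicity q d + 1)
     then p ^ (multiplicity p d - c) * q ^ (multiplicity q d + 1) else d)"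

lemma shift_prime_powers:
  "shift (p ^ i * q ^ j) = (if a < i + c * (j + 1) then p ^ (i - c) * q ^ (j + 1) else p ^ i * q ^ j)"
  using multiplicity_prime_powers_mult[OF prime_p prime_q distinct] by (simp add: shift_def)

lemma p_pos: "0 < p" and q_pos: "0 < q"
  using prime_p prime_q by (simp_all add: prime_gt_0_nat)

lemma c_pos: "0 < c"
  using q_less prime_gt_1_nat[OF prime_q] by (cases c) simp_all

lemma c_le_shifted_exponent:
  assumes "j \<le> b" "a < i + c * (j + 1)"
  shows "c \<le> i"
proof -
  have "c * (j + 1) + c \<le> c * (b + 2)"
    using mult_le_mono2[OF assms(1), of c] by (simp add: algebra_simps)
  then show ?thesis
    using assms(2) c_bound by linarith
qed

lemma shift_shifted:
  assumes "i \<le> a" "j \<le> b" "a < i + c * (j + 1)"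
  shows "shift (p ^ i * q ^ j) \<in> divisors_set (p ^ (a - c) * q ^ (b + 1))"
    and "shift (p ^ i * q ^ j) \<le> p ^ i * q ^ j"
    and "(p ^ (a - c) * q ^ (b + 1)) div shift (p ^ i * q ^ j) = (p ^ a * q ^ b) div (p ^ i * q ^ j)"
proof -
  have "c \<le> i"
    using c_le_shifted_exponent assms(2,3) .
  have shift: "shift (p ^ i * q ^ j) = p ^ (i - c) * q ^ (j + 1)"
    using assms(3) by (simp add: shift_prime_powers)
  show "shift (p ^ i * q ^ j) \<in> divisors_set (p ^ (a - c) * q ^ (b + 1))"
    unfolding shift divisors_set_prime_powers_mult[OF prime_p prime_q]
    using assms(1,2) by (intro exI[of _ "i - c"] exI[of _ "j + 1"]) auto
  have "p ^ (i - c) * q ^ (j + 1) = p ^ (i - c) * q * q ^ j"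
    by simp
  also have "\<dots> \<le> p ^ (i - c) * p ^ c * q ^ j"
    using q_less by simp
  also have "\<dots> = p ^ i * q ^ j"
    using \<open>c \<le> i\<close> by (simp flip: power_add)
  finally show "shift (p ^ i * q ^ j) \<le> p ^ i * q ^ j"
    unfolding shift .
  show "(p ^ (a - c) * q ^ (b + 1)) div shift (p ^ i * q ^ j) = (p ^ a * q ^ b) div (p ^ i * q ^ j)"
    using assms \<open>c \<le> i\<close> p_pos q_pos by (simp add: shift prime_powers_mult_div)
qed

lemma least_pf_fixed_cofactors:
  assumes "j \<le> b" "i + c \<le> a"
  shows "q * least_pf (p ^ (a - i) * q ^ (b - j)) \<le> least_pf (p ^ (a - c - i) * q ^ (b + 1 - j)) * p ^ c"
proof -
  let ?e = "p ^ (a - i) * q ^ (b - j)" and ?g = "p ^ (a - c - i) * q ^ (b + 1 - j)"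
  have "p \<le> p ^ c"
    using c_pos p_pos by (simp add: self_le_power)
  have least_pf_e: "least_pf ?e \<le> p"
    using assms(2) c_pos by (intro least_pf_le_prime_factor prime_p) simp
  have "min p q \<le> least_pf ?g"
    using prime_p prime_q assms(1) by (intro least_pf_prime_powers_mult_ge) auto
  then consider "q \<le> least_pf ?g" | "p \<le> least_pf ?g"
    by linarith
  then show ?thesis
  proof cases
    case 1
    show ?thesis
      using 1 le_trans[OF least_pf_e \<open>p \<le> p ^ c\<close>] by (rule mult_le_mono)
  next
    case 2
    show ?thesis
      using mult_le_mono[OF less_imp_le[OF q_less] le_trans[OF least_pf_e 2]] by (simp add: mult.commute)
  qed
qed

lemma shift_fixed:
  assumes "i \<le> a" "j \<le> b" "\<not> a < i + c * (j + 1)"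
  shows "shift (p ^ i * q ^ j) = p ^ i * q ^ j"
    and "p ^ i * q ^ j \<in> divisors_set (p ^ (a - c) * q ^ (b + 1))"
    and "real ((p ^ (a - c) * q ^ (b + 1)) div (p ^ i * q ^ j)) / real ((p ^ a * q ^ b) div (p ^ i * q ^ j))
      \<le> min 1 (real (least_pf ((p ^ (a - c) * q ^ (b + 1)) div (p ^ i * q ^ j)))
                / real (least_pf ((p ^ a * q ^ b) div (p ^ i * q ^ j))))"
proof -
  have "c \<le> c * (j + 1)"
    by simp
  with assms(3) have "i + c \<le> a"
    by linarith
  show "shift (p ^ i * q ^ j) = p ^ i * q ^ j"
    using assms(3) by (simp add: shift_prime_powers)
  show "p ^ i * q ^ j \<in> divisors_set (p ^ (a - c) * q ^ (b + 1))"
    unfolding divisors_set_prime_powers_mult[OF prime_p prime_q]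
    using \<open>i + c \<le> a\<close> assms(2) by (intro exI[of _ i] conjI exI[of _ j]) auto
  define g where "g = p ^ (a - c - i) * q ^ (b + 1 - j)"
  define e where "e = p ^ (a - i) * q ^ (b - j)"
  have quotients: "(p ^ (a - c) * q ^ (b + 1)) div (p ^ i * q ^ j) = g"
      "(p ^ a * q ^ b) div (p ^ i * q ^ j) = e"
    using prime_powers_mult_div[OF p_pos q_pos, of i "a - c" j "b + 1"]
      prime_powers_mult_div[OF p_pos q_pos, of i a j b] \<open>i + c \<le> a\<close> assms(2)
    by (simp_all add: g_def e_def)
  have "g * p ^ c = e * q"
    using \<open>i + c \<le> a\<close> assms(2) by (simp add: g_def e_def Suc_diff_le flip: power_add)
  then have "real g * real (p ^ c) = real e * real q"
    by (metis of_nat_mult)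
  moreover have "e > 0"
    using p_pos q_pos by (simp add: e_def)
  ultimately have ratio: "real g / real e = real q / real (p ^ c)"
    using p_pos by (simp add: field_simps)
  have "real q * real (least_pf e) \<le> real (least_pf g) * real (p ^ c)"
    using least_pf_fixed_cofactors[OF assms(2) \<open>i + c \<le> a\<close>] unfolding g_def e_def
    by (metis of_nat_le_iff of_nat_mult)
  then have "real q / real (p ^ c) \<le> real (least_pf g) / real (least_pf e)"
    using least_pf_pos[of e] p_pos by (simp add: divide_simps)
  moreover have "real q / real (p ^ c) \<le> 1"
    using q_less p_pos by (simp add: divide_le_eq_1 del: of_nat_power)
  ultimately show "real ((p ^ (a - c) * q ^ (b + 1)) div (p ^ i * q ^ j)) / real ((p ^ a * q ^ b) div (p ^ i * q ^ j))
      \<le> min 1 (real (least_pf ((p ^ (a - c) * q ^ (b + 1)) div (p ^ i * q ^ j)))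
                / real (least_pf ((p ^ a * q ^ b) div (p ^ i * q ^ j))))"
    unfolding quotients ratio by simp
qed

lemma inj_on_shift: "inj_on shift (divisors_set (p ^ a * q ^ b))"
proof (rule inj_onI)
  fix d d'
  assume "d \<in> divisors_set (p ^ a * q ^ b)" "d' \<in> divisors_set (p ^ a * q ^ b)"
    and eq: "shift d = shift d'"
  then obtain i j i' j' where ij: "j \<le> b" "d = p ^ i * q ^ j" and ij': "j' \<le> b" "d' = p ^ i' * q ^ j'"
    unfolding divisors_set_prime_powers_mult[OF prime_p prime_q] by blast
  have weight: "(k - c) + c * ((l + 1) + 1) = k + c * (l + 1)" if "c \<le> k" for k l
    using that by (simp add: algebra_simps)
  from eq have "(if a < i + c * (j + 1) then p ^ (i - c) * q ^ (j + 1) else p ^ i * q ^ j)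
      = (if a < i' + c * (j' + 1) then p ^ (i' - c) * q ^ (j' + 1) else p ^ i' * q ^ j')"
    by (simp only: ij ij' shift_prime_powers)
  then show "d = d'"
    unfolding ij ij'
    using c_le_shifted_exponent[OF ij(1), of i] c_le_shifted_exponent[OF ij'(1), of i'] weight
    by (auto simp: prime_powers_mult_eq_iff[OF prime_p prime_q distinct] simp del: power_Suc split: if_splits)
qed

lemma reducing_shift:
  assumes "odd p" "odd q"
  shows "reducing (p ^ a * q ^ b) (p ^ (a - c) * q ^ (b + 1)) shift"
proof -
  have conditions: "shift d \<in> divisors_set (p ^ (a - c) * q ^ (b + 1)) \<and> shift d \<le> d \<and>
      real ((p ^ (a - c) * q ^ (b + 1)) div shift d) / real ((p ^ a * q ^ b) div d)
        \<le> min 1 (real (least_pf ((p ^ (a - c) * q ^ (b + 1)) div shift d))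
                  / real (least_pf ((p ^ a * q ^ b) div d)))"
    if divisor: "d \<in> divisors_set (p ^ a * q ^ b)" for d
  proof -
    obtain i j where ij: "i \<le> a" "j \<le> b" and d: "d = p ^ i * q ^ j"
      using divisor unfolding divisors_set_prime_powers_mult[OF prime_p prime_q] by blast
    show ?thesis
    proof (cases "a < i + c * (j + 1)")
      case True
      then show ?thesis
        using shift_shifted[OF ij True] least_pf_pos unfolding d by simp
    next
      case False
      then show ?thesis
        using shift_fixed[OF ij False] unfolding d by simp
    qed
  qed
  show ?thesis
  proof (rule reducingI_odd_inj)
    show "odd (p ^ (a - c) * q ^ (b + 1))"
      using assms by simp
  qed (use inj_on_shift conditions in blast)+
qed

end

theorem lemma3p8:
  fixes p q a b :: nat
  assumes "prime p" and "prime q" and "odd p" and "odd q" and "p \<noteq> q"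
    and "q < p ^ ((a + 1) div (b + 2))"
  shows "reduces_to (p ^ a * q ^ b) (p ^ (a - (a + 1) div (b + 2)) * q ^ (b + 1))"
proof -
  interpret two_prime_shift p q a b "(a + 1) div (b + 2)"
    by unfold_locales (rule assms div_times_less_eq_dividend)+
  show ?thesis
    unfolding reduces_to_def using reducing_shift[OF assms(3,4)] by (rule exI[of _ shift])
qed

end
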